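(* Let $\mathcal{X}=\{1,\dots,n\}$, let $\pi$ be a strictly positive probability distribution on $\mathcal{X}$, let $P$ be a $\pi$-reversible transition matrix, let $G$ be the Gibbs kernel induced by a partition $\mathcal{X}=\bigsqcup_{i=1}^k\mathcal{O}_i$, and for $\alpha\in[0,1]$ let $A_\alpha=\alpha P+(1-\alpha)G$. Then $$\|A_\alpha-\Pi\|_{F,\pi}^2=2\alpha(1-\alpha)\operatorname{Tr}(\overline{P})+\alpha^2\operatorname{Tr}(P^2)+(1-\alpha)^2k-1.$$
   Context: $\pi$-reversible means $\pi(x)P(x,y)=\pi(y)P(y,x)$ for all $x,y$. The Gibbs kernel is $G(x,y)=\pi(y)/\pi(\mathcal{O}(x))$ if $y\in\mathcal{O}(x)$ and $0$ otherwise, where $\mathcal{O}(x)$ is the block containing $x$ and $\pi(\mathcal{O})=\sum_{z\in\mathcal{O}}\pi(z)$. $\overline{P}$ is the $k\times k$ projection chain $\overline{P}(i,j)=\frac{1}{\pi(\mathcal{O}_i)}\sum_{x\in\mathcal{O}_i,\,y\in\mathcal{O}_j}\pi(x)P(x,y)$. $\Pi$ is the $n\times n$ matrix with every row equal to $\pi$. For $n\times n$ real matrices, $\|M\|_{F,\pi}^2=\operatorname{Tr}(M^*M)$, where $M^*$ is the adjoint of $M$ in $\ell^2(\pi)$, i.e. $M^*(x,y)=\pi(y)M(y,x)/\pi(x)$. *)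

theory Defs
  imports Complex_Main
begin

text \<open>State space: a finite type 'a (playing the role of {1,...,n}).
  Matrices are functions 'a \<Rightarrow> 'a \<Rightarrow> real.\<close>

definition mat_mult :: "('a::finite \<Rightarrow> 'a \<Rightarrow> real) \<Rightarrow> ('a \<Rightarrow> 'a \<Rightarrow> real) \<Rightarrow> 'a \<Rightarrow> 'a \<Rightarrow> real" where
  "mat_mult A B = (\<lambda>x z. \<Sum>y\<in>UNIV. A x y * B y z)"

definition mat_trace :: "('a::finite \<Rightarrow> 'a \<Rightarrow> real) \<Rightarrow> real" where
  "mat_trace M = (\<Sum>x\<in>UNIV. M x x)"

definition prob_dist :: "('a::finite \<Rightarrow> real) \<Rightarrow> bool" where
  "prob_dist \<pi> \<longleftrightarrow> (\<forall>x. \<pi> x > 0) \<and> (\<Sum>x\<in>UNIV. \<pi> x) = 1"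

definition transition_matrix :: "('a::finite \<Rightarrow> 'a \<Rightarrow> real) \<Rightarrow> bool" where
  "transition_matrix P \<longleftrightarrow> (\<forall>x y. P x y \<ge> 0) \<and> (\<forall>x. (\<Sum>y\<in>UNIV. P x y) = 1)"

definition reversible :: "('a \<Rightarrow> real) \<Rightarrow> ('a \<Rightarrow> 'a \<Rightarrow> real) \<Rightarrow> bool" where
  "reversible \<pi> P \<longleftrightarrow> (\<forall>x y. \<pi> x * P x y = \<pi> y * P y x)"

definition is_partition :: "(nat \<Rightarrow> 'a set) \<Rightarrow> nat \<Rightarrow> bool" where
  "is_partition Bl k \<longleftrightarrow> (\<forall>i<k. Bl i \<noteq> {}) \<and>
     (\<forall>i<k. \<forall>j<k. i \<noteq> j \<longrightarrow> Bl i \<inter> Bl j = {}) \<and> (\<Union>i<k. Bl i) = UNIV"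

definition block :: "(nat \<Rightarrow> 'a set) \<Rightarrow> nat \<Rightarrow> 'a \<Rightarrow> 'a set" where
  "block Bl k x = Bl (THE i. i < k \<and> x \<in> Bl i)"

definition pi_mass :: "('a \<Rightarrow> real) \<Rightarrow> 'a set \<Rightarrow> real" where
  "pi_mass \<pi> S = (\<Sum>z\<in>S. \<pi> z)"

definition gibbs_kernel :: "('a \<Rightarrow> real) \<Rightarrow> (nat \<Rightarrow> 'a set) \<Rightarrow> nat \<Rightarrow> 'a \<Rightarrow> 'a \<Rightarrow> real" where
  "gibbs_kernel \<pi> Bl k x y =
     (if y \<in> block Bl k x then \<pi> y / pi_mass \<pi> (block Bl k x) else 0)"

definition proj_chain :: "('a \<Rightarrow> real) \<Rightarrow> ('a \<Rightarrow> 'a \<Rightarrow> real) \<Rightarrow> (nat \<Rightarrow> 'a set) \<Rightarrow> nat \<Rightarrow> nat \<Rightarrow> real" where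
  "proj_chain \<pi> P Bl i j =
     (1 / pi_mass \<pi> (Bl i)) * (\<Sum>x\<in>Bl i. \<Sum>y\<in>Bl j. \<pi> x * P x y)"

definition Pi_mat :: "('a \<Rightarrow> real) \<Rightarrow> 'a \<Rightarrow> 'a \<Rightarrow> real" where
  "Pi_mat \<pi> = (\<lambda>x y. \<pi> y)"

text \<open>Adjoint in l^2(pi).\<close>
definition adjoint :: "('a \<Rightarrow> real) \<Rightarrow> ('a \<Rightarrow> 'a \<Rightarrow> real) \<Rightarrow> 'a \<Rightarrow> 'a \<Rightarrow> real" where
  "adjoint \<pi> M = (\<lambda>x y. \<pi> y * M y x / \<pi> x)"

definition frob_sq :: "('a::finite \<Rightarrow> real) \<Rightarrow> ('a \<Rightarrow> 'a \<Rightarrow> real) \<Rightarrow> real" where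
  "frob_sq \<pi> M = mat_trace (mat_mult (adjoint \<pi> M) M)"

end

theory Submission
  imports Defs
begin

text \<open>
  The squared Frobenius norm in \<open>\<ell>\<^sup>2(\<pi>)\<close> is the quadratic form of the pairing
  \<open>\<langle>M, N\<rangle> = \<Sum> \<pi>(x)/\<pi>(y) M(x,y) N(x,y)\<close>, summed over all \<open>x, y\<close>. Expanding
  \<open>\<langle>A\<^sub>\<alpha> - \<Pi>, A\<^sub>\<alpha> - \<Pi>\<rangle>\<close> leaves six pairings: \<open>\<langle>P, P\<rangle> = Tr(P\<^sup>2)\<close> by
  reversibility; \<open>\<langle>G, G\<rangle> = k\<close> and \<open>\<langle>P, G\<rangle>\<close> = trace of the projection chain, because
  \<open>G(x,\<cdot>)\<close> is \<open>\<pi>\<close> restricted to the block of \<open>x\<close> and renormalised; and every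
  pairing with \<open>\<Pi>\<close> equals 1 since \<open>P\<close>, \<open>G\<close> and \<open>\<Pi>\<close> are stochastic. The identity is
  polynomial in \<open>\<alpha>\<close>.
\<close>

definition pi_inner :: "('a::finite \<Rightarrow> real) \<Rightarrow> ('a \<Rightarrow> 'a \<Rightarrow> real) \<Rightarrow> ('a \<Rightarrow> 'a \<Rightarrow> real) \<Rightarrow> real"
  where "pi_inner \<pi> M N = (\<Sum>x\<in>UNIV. \<Sum>y\<in>UNIV. \<pi> x / \<pi> y * M x y * N x y)"

lemma frob_sq_eq_pi_inner: "frob_sq \<pi> M = pi_inner \<pi> M M"
  unfolding frob_sq_def mat_trace_def mat_mult_def adjoint_def pi_inner_def
  by (subst sum.swap) (simp add: mult.assoc)

lemma pi_inner_expand: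
  "pi_inner \<pi> (\<lambda>x y. a * A x y + b * B x y - C x y) (\<lambda>x y. a * A x y + b * B x y - C x y)
   = a\<^sup>2 * pi_inner \<pi> A A + b\<^sup>2 * pi_inner \<pi> B B + pi_inner \<pi> C C
     + 2 * a * b * pi_inner \<pi> A B - 2 * a * pi_inner \<pi> A C - 2 * b * pi_inner \<pi> B C"
proof -
  have pointwise: "w * (a * A' + b * B' - C') * (a * A' + b * B' - C')
      = a\<^sup>2 * (w * A' * A') + b\<^sup>2 * (w * B' * B') + w * C' * C'
        + 2 * a * b * (w * A' * B') - 2 * a * (w * A' * C') - 2 * b * (w * B' * C')"
    for w A' B' C' :: real
    by (simp add: algebra_simps power2_eq_square)
  show ?thesis
    unfolding pi_inner_def pointwise by (simp only: sum.distrib sum_subtractf sum_distrib_left)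
qed

lemma pi_inner_reversible_self:
  assumes "\<And>x. \<pi> x \<noteq> 0" and "reversible \<pi> P"
  shows "pi_inner \<pi> P P = mat_trace (mat_mult P P)"
proof -
  have "\<pi> x / \<pi> y * P x y = P y x" for x y
    using assms(2) \<open>\<pi> y \<noteq> 0\<close> unfolding reversible_def by (simp add: field_simps)
  then have "pi_inner \<pi> P P = (\<Sum>x\<in>UNIV. \<Sum>y\<in>UNIV. P x y * P y x)"
    unfolding pi_inner_def by (simp add: mult.commute)
  also have "\<dots> = mat_trace (mat_mult P P)"
    unfolding mat_trace_def mat_mult_def ..
  finally show ?thesis .
qed

lemma pi_inner_Pi_mat:
  assumes "\<And>y. \<pi> y \<noteq> 0" and "\<And>x. (\<Sum>y\<in>UNIV. M x y) = 1"
  shows "pi_inner \<pi> M (Pi_mat \<pi>) = (\<Sum>x\<in>UNIV. \<pi> x)"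
proof -
  have "\<pi> x / \<pi> y * M x y * Pi_mat \<pi> x y = \<pi> x * M x y" for x y
    using assms(1)[of y] unfolding Pi_mat_def by simp
  then show ?thesis
    unfolding pi_inner_def by (simp add: sum_distrib_left[symmetric] assms(2))
qed

lemma block_eq:
  assumes "is_partition Bl k" "i < k" "x \<in> Bl i"
  shows "block Bl k x = Bl i"
proof -
  have "(THE j. j < k \<and> x \<in> Bl j) = i"
    using assms unfolding is_partition_def by (intro the_equality) auto
  then show ?thesis unfolding block_def by simp
qed

lemma sum_UNIV_partition:
  fixes f :: "'a::finite \<Rightarrow> 'b::comm_monoid_add"
  assumes "is_partition Bl k"
  shows "(\<Sum>x\<in>UNIV. f x) = (\<Sum>i<k. \<Sum>x\<in>Bl i. f x)"
proof -
  have "UNIV = (\<Union>i<k. Bl i)"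
    using assms unfolding is_partition_def by auto
  then have "(\<Sum>x\<in>UNIV. f x) = sum f (\<Union>i<k. Bl i)"
    by simp
  also have "\<dots> = (\<Sum>i<k. sum f (Bl i))"
    using assms unfolding is_partition_def by (intro sum.UNION_disjoint) auto
  finally show ?thesis .
qed

lemma pi_mass_block_pos:
  fixes \<pi> :: "'a::finite \<Rightarrow> real"
  assumes "\<And>x. \<pi> x > 0" and "is_partition Bl k" and "i < k"
  shows "pi_mass \<pi> (Bl i) > 0"
  using assms unfolding is_partition_def pi_mass_def
  by (intro sum_pos) auto

lemma gibbs_kernel_on_block:
  assumes "is_partition Bl k" "i < k" "x \<in> Bl i"
  shows "gibbs_kernel \<pi> Bl k x y = (if y \<in> Bl i then \<pi> y / pi_mass \<pi> (Bl i) else 0)"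
  unfolding gibbs_kernel_def block_eq[OF assms] ..

lemma gibbs_kernel_row_sum:
  fixes \<pi> :: "'a::finite \<Rightarrow> real"
  assumes "\<And>x. \<pi> x > 0" and "is_partition Bl k"
  shows "(\<Sum>y\<in>UNIV. gibbs_kernel \<pi> Bl k x y) = 1"
proof -
  obtain i where i: "i < k" "x \<in> Bl i"
    using assms(2) unfolding is_partition_def by blast
  have "(\<Sum>y\<in>UNIV. gibbs_kernel \<pi> Bl k x y) = (\<Sum>y\<in>Bl i. \<pi> y) / pi_mass \<pi> (Bl i)"
    by (simp add: gibbs_kernel_on_block[OF assms(2) i] sum.inter_restrict[symmetric] sum_divide_distrib)
  also have "\<dots> = 1"
    using pi_mass_block_pos[of \<pi>, OF assms i(1)] by (simp add: pi_mass_def)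
  finally show ?thesis .
qed

lemma pi_inner_gibbs_kernel:
  fixes \<pi> :: "'a::finite \<Rightarrow> real"
  assumes "\<And>x. \<pi> x \<noteq> 0" and "is_partition Bl k"
  shows "pi_inner \<pi> M (gibbs_kernel \<pi> Bl k)
    = (\<Sum>i<k. (\<Sum>x\<in>Bl i. \<Sum>y\<in>Bl i. \<pi> x * M x y) / pi_mass \<pi> (Bl i))"
proof -
  have row: "(\<Sum>y\<in>UNIV. \<pi> x / \<pi> y * M x y * gibbs_kernel \<pi> Bl k x y)
      = (\<Sum>y\<in>Bl i. \<pi> x * M x y) / pi_mass \<pi> (Bl i)" if "i < k" "x \<in> Bl i" for i x
  proof -
    have "\<pi> x / \<pi> y * M x y * gibbs_kernel \<pi> Bl k x y
        = (if y \<in> Bl i then \<pi> x * M x y / pi_mass \<pi> (Bl i) else 0)" for y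
      using assms(1)[of y] by (simp add: gibbs_kernel_on_block[OF assms(2) that])
    then show ?thesis
      by (simp add: sum.inter_restrict[symmetric] sum_divide_distrib)
  qed
  have "pi_inner \<pi> M (gibbs_kernel \<pi> Bl k)
      = (\<Sum>i<k. \<Sum>x\<in>Bl i. \<Sum>y\<in>UNIV. \<pi> x / \<pi> y * M x y * gibbs_kernel \<pi> Bl k x y)"
    unfolding pi_inner_def by (rule sum_UNIV_partition[OF assms(2)])
  also have "\<dots> = (\<Sum>i<k. \<Sum>x\<in>Bl i. (\<Sum>y\<in>Bl i. \<pi> x * M x y) / pi_mass \<pi> (Bl i))"
    using row by (intro sum.cong refl) auto
  finally show ?thesis
    by (simp only: sum_divide_distrib)
qed

lemma pi_inner_gibbs_kernel_self:
  fixes \<pi> :: "'a::finite \<Rightarrow> real"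
  assumes "\<And>x. \<pi> x > 0" and "is_partition Bl k"
  shows "pi_inner \<pi> (gibbs_kernel \<pi> Bl k) (gibbs_kernel \<pi> Bl k) = real k"
proof -
  have nonzero: "\<And>x. \<pi> x \<noteq> 0"
    using assms(1) by (metis less_irrefl)
  have per_block: "(\<Sum>x\<in>Bl i. \<Sum>y\<in>Bl i. \<pi> x * gibbs_kernel \<pi> Bl k x y) / pi_mass \<pi> (Bl i) = 1"
    if "i \<in> {..<k}" for i
  proof -
    have mass_pos: "pi_mass \<pi> (Bl i) > 0"
      using pi_mass_block_pos[of \<pi>, OF assms] that by simp
    have "(\<Sum>y\<in>Bl i. gibbs_kernel \<pi> Bl k x y) = 1" if "x \<in> Bl i" for x
      using mass_pos \<open>i \<in> {..<k}\<close>
      by (simp add: gibbs_kernel_on_block[OF assms(2) _ that] sum_divide_distrib[symmetric]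
          pi_mass_def)
    then have "(\<Sum>x\<in>Bl i. \<Sum>y\<in>Bl i. \<pi> x * gibbs_kernel \<pi> Bl k x y) = pi_mass \<pi> (Bl i)"
      by (simp add: sum_distrib_left[symmetric] pi_mass_def)
    then show ?thesis
      using mass_pos by simp
  qed
  have "pi_inner \<pi> (gibbs_kernel \<pi> Bl k) (gibbs_kernel \<pi> Bl k)
      = (\<Sum>i<k. (\<Sum>x\<in>Bl i. \<Sum>y\<in>Bl i. \<pi> x * gibbs_kernel \<pi> Bl k x y) / pi_mass \<pi> (Bl i))"
    by (rule pi_inner_gibbs_kernel[OF nonzero assms(2)])
  also have "\<dots> = (\<Sum>i<k. 1)"
    by (rule sum.cong[OF refl per_block])
  finally show ?thesis
    by simp
qed

lemma pi_inner_gibbs_kernel_proj_chain: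
  fixes \<pi> :: "'a::finite \<Rightarrow> real"
  assumes "\<And>x. \<pi> x \<noteq> 0" and "is_partition Bl k"
  shows "pi_inner \<pi> P (gibbs_kernel \<pi> Bl k) = (\<Sum>i<k. proj_chain \<pi> P Bl i i)"
  unfolding pi_inner_gibbs_kernel[OF assms] proj_chain_def by simp

theorem proposition4p2:
  fixes \<pi> :: "'a::finite \<Rightarrow> real" and P :: "'a \<Rightarrow> 'a \<Rightarrow> real"
    and Bl :: "nat \<Rightarrow> 'a set" and k :: nat and \<alpha> :: real
  assumes "prob_dist \<pi>"
    and "transition_matrix P"
    and "reversible \<pi> P"
    and "is_partition Bl k"
    and "0 \<le> \<alpha>" and "\<alpha> \<le> 1"
  shows "frob_sq \<pi> (\<lambda>x y. \<alpha> * P x y + (1 - \<alpha>) * gibbs_kernel \<pi> Bl k x y - Pi_mat \<pi> x y)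
    = 2 * \<alpha> * (1 - \<alpha>) * (\<Sum>i<k. proj_chain \<pi> P Bl i i)
      + \<alpha>^2 * mat_trace (mat_mult P P) + (1 - \<alpha>)^2 * real k - 1"
proof -
  let ?G = "gibbs_kernel \<pi> Bl k" and ?\<Pi> = "Pi_mat \<pi>"
  have pos: "\<And>x. \<pi> x > 0" and total: "(\<Sum>x\<in>UNIV. \<pi> x) = 1"
    using assms(1) unfolding prob_dist_def by auto
  then have nonzero: "\<And>x. \<pi> x \<noteq> 0"
    by (metis less_irrefl)
  have P_rows: "\<And>x. (\<Sum>y\<in>UNIV. P x y) = 1"
    using assms(2) unfolding transition_matrix_def by auto
  have \<Pi>_rows: "\<And>x. (\<Sum>y\<in>UNIV. ?\<Pi> x y) = 1"
    using total unfolding Pi_mat_def .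
  have "frob_sq \<pi> (\<lambda>x y. \<alpha> * P x y + (1 - \<alpha>) * ?G x y - ?\<Pi> x y)
      = \<alpha>\<^sup>2 * pi_inner \<pi> P P + (1 - \<alpha>)\<^sup>2 * pi_inner \<pi> ?G ?G + pi_inner \<pi> ?\<Pi> ?\<Pi>
        + 2 * \<alpha> * (1 - \<alpha>) * pi_inner \<pi> P ?G
        - 2 * \<alpha> * pi_inner \<pi> P ?\<Pi> - 2 * (1 - \<alpha>) * pi_inner \<pi> ?G ?\<Pi>"
    unfolding frob_sq_eq_pi_inner by (rule pi_inner_expand)
  also have "\<dots> = \<alpha>\<^sup>2 * mat_trace (mat_mult P P) + (1 - \<alpha>)\<^sup>2 * real k + 1
        + 2 * \<alpha> * (1 - \<alpha>) * (\<Sum>i<k. proj_chain \<pi> P Bl i i) - 2 * \<alpha> - 2 * (1 - \<alpha>)"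
    by (simp add: pi_inner_reversible_self[OF nonzero assms(3)]
        pi_inner_gibbs_kernel_self[OF pos assms(4)]
        pi_inner_gibbs_kernel_proj_chain[OF nonzero assms(4), where P = P]
        pi_inner_Pi_mat[OF nonzero] P_rows \<Pi>_rows gibbs_kernel_row_sum[OF pos assms(4)] total)
  finally show ?thesis
    by (simp add: algebra_simps)
qed

end
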